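(* Consider the periodic robust learning MPC scheme described in the context, and assume the stage costs $l_t(z,v)$ are continuous, convex and satisfy $l_t(z,v)\ge 0$. Then at every iteration $j\ge1$ and every $t\in\{0,1,\dots,T-N\}$, the closed-loop cumulative cost $J^j(z_t^j)=\sum_{k=t}^T l_k(z_k^j,v_k^j)$ satisfies $J^j(z_t^j)\le J_{t|t'}^{i,j}(z_{t|t'}^{i,j})$ for every shifted state $z_{t|t'}^{i,j}\in\mathbb{SS}_t^j$ with $z_{t|t'}^{i,j}=z_t^j$. In particular, if $\theta^j\in\mathbb{W}_0^i$ for some $i\in\{0,\dots,j-1\}$, then $J^j(z_0^j)\le J_{0|0}^{i,j}(z_0^j)$.
   Context: Let $T\in\mathbb{N}$ be the period/task length and $N\le T$ the prediction horizon; $\mathbb{N}_a^b=\{a,a+1,\dots,b\}$. For $t\in\mathbb{N}_0^T$ let $A_t\in\mathbb{R}^{n\times n}$, $B_t\in\mathbb{R}^{n\times m}$, $C_t\in\mathbb{R}^{n\times d}$ be given, together with tightened constraint data $\bar F_t,\bar G_t,\bar f_t$ (polytopic constraints $\bar F_t z+\bar G_t v\le \bar f_t$), gains $K_t$ and $\Phi_t=A_t+B_tK_t$. Let $(\theta,t)\mapsto w_{\theta,t}\in\mathbb{R}^d$ be a given (known) parametrized disturbance profile, with parameters $\theta$ ranging in a set $\mathbb{W}_\theta$. Each iteration $j=0,1,2,\dots$ has a parameter $\theta^j\in\mathbb{W}_\theta$, known at iteration $j$, and nominal dynamics $z_{k+1}=A_kz_k+B_kv_k+C_kw_{\theta^j,k}$,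 all iterations starting from $z_0^j=x_s$. Standing assumption: a closed-loop trajectory $\{\mathbf{z}^0,\mathbf{v}^0\}$ of iteration $0$ (parameter $\theta^0$) is given satisfying the nominal dynamics and tightened constraints, and $\mathbb{W}_t^0\supseteq\mathbb{W}_\theta$ for all $t$; at each solved LMPC problem an optimal solution is selected. Shifting: for a past iteration $i$ with recorded closed-loop states $\mathbf{z}^i=[z_0^i,\dots,z_T^i]$, inputs $\mathbf{v}^i=[v_0^i,\dots,v_T^i]$ and parameter $\theta^i$, a parameter $\theta$ and a start time $t$, define $e_{t|t}=0$, $e_{k+1|t}=\Phi_k e_{k|t}+C_k(w_{\theta,k}-w_{\theta^i,k})$, $v_{k|t}=v_k^i+K_ke_{k|t}$, $z_{k|t}=z_k^i+e_{k|t}$ for $k\in\mathbb{N}_t^T$; when $\theta=\theta^j$ these are denoted $z_{k|t}^{i,j},v_{k|t}^{i,j}$. The feasible disturbance set $\mathbb{W}_t^i$ is the set of $\theta$ for which the resulting shifted pairs satisfy $\bar F_k z_{k|t}+\bar G_k v_{k|t}\le \bar f_k$ for all $k\in\mathbb{N}_t^T$. Safe sets and cost-to-go at iteration $j$: $\mathbb{SS}_k^j=\{z_{k|t}^{i,j}: i\in\mathbb{N}_0^{j-1},\ t\in\mathbb{N}_0^k,\ \theta^j\in\mathbb{W}_t^i\}$ (a finite set of points), shifted costs $J_{k|t}^{i,j}(z_{k|t}^{i,j})=\sum_{r=k}^T l_r(z_{r|t}^{i,j},v_{r|t}^{i,j})$, and $Q_k^j(z)=\min\{J_{k|t}^{i,j}: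 i\in\mathbb{N}_0^{j-1}, t\in\mathbb{N}_0^k, \theta^j\in\mathbb{W}_t^i, z_{k|t}^{i,j}=z\}$ if $z\in\mathbb{SS}_k^j$, and $Q_k^j(z)=+\infty$ otherwise. LMPC problem at time $t\in\mathbb{N}_0^{T-N}$ of iteration $j$, given current nominal state $z_t^j$: minimize $\sum_{k=t}^{t+N-1}l_k(z_{k|t},v_{k|t})+Q_{t+N}^j(z_{t+N|t})$ over $v_{t|t},\dots,v_{t+N-1|t}$ subject to $z_{t|t}=z_t^j$, $z_{k+1|t}=A_kz_{k|t}+B_kv_{k|t}+C_kw_{\theta^j,k}$, $\bar F_kz_{k|t}+\bar G_kv_{k|t}\le\bar f_k$ for $k\in\mathbb{N}_t^{t+N-1}$, and $z_{t+N|t}\in\mathbb{SS}_{t+N}^j$. With optimal inputs $v^{j,*}_{k|t}$, the closed-loop input is $v_t^j=v_{t|t}^{j,*}$ if $t+N\le T$ and $v_t^j=v_{t|T-N}^{j,*}$ if $t+N>T$, and $z_{t+1}^j=A_tz_t^j+B_tv_t^j+C_tw_{\theta^j,t}$. The closed-loop $\{\mathbf{z}^j,\mathbf{v}^j\}$ together with $\theta^j$ is recorded and used as historical data for later iterations. *)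

theory Defs
  imports "HOL-Analysis.Analysis"
begin

text \<open>States live in real^'n, inputs in
real^'m, disturbances in real^'d, polytopic constraint rows are indexed by 'c, and the
disturbance-profile parameters theta range over the type 'p.  Vector inequalities on
real^'c are componentwise.\<close>

record ('n, 'm, 'd, 'c, 'p) lmpc_sys =
  sA :: "nat \<Rightarrow> real^'n^'n"
  sB :: "nat \<Rightarrow> real^'m^'n"
  sC :: "nat \<Rightarrow> real^'d^'n"
  sK :: "nat \<Rightarrow> real^'n^'m"
  sF :: "nat \<Rightarrow> real^'n^'c"
  sG :: "nat \<Rightarrow> real^'m^'c"
  sf :: "nat \<Rightarrow> real^'c"
  sl :: "nat \<Rightarrow> real^'n \<Rightarrow> real^'m \<Rightarrow> real"
  sw :: "'p \<Rightarrow> nat \<Rightarrow> real^'d"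
  sT :: nat
  sN :: nat
  sxs :: "real^'n"

definition Phi :: "('n::finite, 'm::finite, 'd::finite, 'c::finite, 'p) lmpc_sys \<Rightarrow> nat \<Rightarrow> real^'n^'n" where
  "Phi S k = sA S k + sB S k ** sK S k"

definition dyn :: "('n::finite, 'm::finite, 'd::finite, 'c::finite, 'p) lmpc_sys \<Rightarrow> 'p \<Rightarrow> nat \<Rightarrow> real^'n \<Rightarrow> real^'m \<Rightarrow> real^'n" where
  "dyn S \<theta> k z v = sA S k *v z + sB S k *v v + sC S k *v sw S \<theta> k"

definition cstr :: "('n::finite, 'm::finite, 'd::finite, 'c::finite, 'p) lmpc_sys \<Rightarrow> nat \<Rightarrow> real^'n \<Rightarrow> real^'m \<Rightarrow> bool" where
  "cstr S k z v \<longleftrightarrow> sF S k *v z + sG S k *v v \<le> sf S k"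

text \<open>Shifting error: shift_err S thi th t d = e_{t+d|t} for past parameter thi and new parameter th.\<close>
primrec shift_err :: "('n::finite, 'm::finite, 'd::finite, 'c::finite, 'p) lmpc_sys \<Rightarrow> 'p \<Rightarrow> 'p \<Rightarrow> nat \<Rightarrow> nat \<Rightarrow> real^'n" where
  "shift_err S thi th t 0 = 0"
| "shift_err S thi th t (Suc d) =
     Phi S (t + d) *v shift_err S thi th t d + sC S (t + d) *v (sw S th (t + d) - sw S thi (t + d))"

definition shz :: "('n::finite, 'm::finite, 'd::finite, 'c::finite, 'p) lmpc_sys \<Rightarrow> (nat \<Rightarrow> real^'n) \<Rightarrow> 'p \<Rightarrow> 'p \<Rightarrow> nat \<Rightarrow> nat \<Rightarrow> real^'n" where
  "shz S zi thi th t k = zi k + shift_err S thi th t (k - t)"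

definition shv :: "('n::finite, 'm::finite, 'd::finite, 'c::finite, 'p) lmpc_sys \<Rightarrow> (nat \<Rightarrow> real^'m) \<Rightarrow> 'p \<Rightarrow> 'p \<Rightarrow> nat \<Rightarrow> nat \<Rightarrow> real^'m" where
  "shv S vi thi th t k = vi k + sK S k *v shift_err S thi th t (k - t)"

definition Wfeas :: "('n::finite, 'm::finite, 'd::finite, 'c::finite, 'p) lmpc_sys \<Rightarrow> (nat \<Rightarrow> real^'n) \<Rightarrow> (nat \<Rightarrow> real^'m) \<Rightarrow> 'p \<Rightarrow> nat \<Rightarrow> 'p set" where
  "Wfeas S zi vi thi t = {th. \<forall>k\<in>{t..sT S}. cstr S k (shz S zi thi th t k) (shv S vi thi th t k)}"

text \<open>Historical data: zs i, vs i, th i are the closed-loop states, inputs and parameter of iteration i.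
  Safe set SS^j_k.\<close>
definition SS :: "('n::finite, 'm::finite, 'd::finite, 'c::finite, 'p) lmpc_sys \<Rightarrow> (nat \<Rightarrow> nat \<Rightarrow> real^'n) \<Rightarrow> (nat \<Rightarrow> nat \<Rightarrow> real^'m) \<Rightarrow> (nat \<Rightarrow> 'p) \<Rightarrow> nat \<Rightarrow> nat \<Rightarrow> (real^'n) set" where
  "SS S zs vs th j k = {shz S (zs i) (th i) (th j) t k | i t. i < j \<and> t \<le> k \<and> th j \<in> Wfeas S (zs i) (vs i) (th i) t}"

definition Jsh :: "('n::finite, 'm::finite, 'd::finite, 'c::finite, 'p) lmpc_sys \<Rightarrow> (nat \<Rightarrow> nat \<Rightarrow> real^'n) \<Rightarrow> (nat \<Rightarrow> nat \<Rightarrow> real^'m) \<Rightarrow> (nat \<Rightarrow> 'p) \<Rightarrow> nat \<Rightarrow> nat \<Rightarrow> nat \<Rightarrow> nat \<Rightarrow> real" where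
  "Jsh S zs vs th i j t k = (\<Sum>r = k..sT S. sl S r (shz S (zs i) (th i) (th j) t r) (shv S (vs i) (th i) (th j) t r))"

text \<open>Cost-to-go Q^j_k (value +infinity outside the safe set: the infimum of the empty set).\<close>
definition Qf :: "('n::finite, 'm::finite, 'd::finite, 'c::finite, 'p) lmpc_sys \<Rightarrow> (nat \<Rightarrow> nat \<Rightarrow> real^'n) \<Rightarrow> (nat \<Rightarrow> nat \<Rightarrow> real^'m) \<Rightarrow> (nat \<Rightarrow> 'p) \<Rightarrow> nat \<Rightarrow> nat \<Rightarrow> real^'n \<Rightarrow> ereal" where
  "Qf S zs vs th j k z =
     (INF p \<in> {(i, t). i < j \<and> t \<le> k \<and> th j \<in> Wfeas S (zs i) (vs i) (th i) t
                        \<and> shz S (zs i) (th i) (th j) t k = z}.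
        ereal (Jsh S zs vs th (fst p) j (snd p) k))"

primrec pred :: "('n::finite, 'm::finite, 'd::finite, 'c::finite, 'p) lmpc_sys \<Rightarrow> 'p \<Rightarrow> real^'n \<Rightarrow> nat \<Rightarrow> (nat \<Rightarrow> real^'m) \<Rightarrow> nat \<Rightarrow> real^'n" where
  "pred S th z t u 0 = z"
| "pred S th z t u (Suc d) = dyn S th (t + d) (pred S th z t u d) (u (t + d))"

definition lmpc_feasible :: "('n::finite, 'm::finite, 'd::finite, 'c::finite, 'p) lmpc_sys \<Rightarrow> (nat \<Rightarrow> nat \<Rightarrow> real^'n) \<Rightarrow> (nat \<Rightarrow> nat \<Rightarrow> real^'m) \<Rightarrow> (nat \<Rightarrow> 'p) \<Rightarrow> nat \<Rightarrow> nat \<Rightarrow> real^'n \<Rightarrow> (nat \<Rightarrow> real^'m) \<Rightarrow> bool" where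
  "lmpc_feasible S zs vs th j t z u \<longleftrightarrow>
     (\<forall>d < sN S. cstr S (t + d) (pred S (th j) z t u d) (u (t + d)))
     \<and> pred S (th j) z t u (sN S) \<in> SS S zs vs th j (t + sN S)"

definition lmpc_cost :: "('n::finite, 'm::finite, 'd::finite, 'c::finite, 'p) lmpc_sys \<Rightarrow> (nat \<Rightarrow> nat \<Rightarrow> real^'n) \<Rightarrow> (nat \<Rightarrow> nat \<Rightarrow> real^'m) \<Rightarrow> (nat \<Rightarrow> 'p) \<Rightarrow> nat \<Rightarrow> nat \<Rightarrow> real^'n \<Rightarrow> (nat \<Rightarrow> real^'m) \<Rightarrow> ereal" where
  "lmpc_cost S zs vs th j t z u =
     ereal (\<Sum>d < sN S. sl S (t + d) (pred S (th j) z t u d) (u (t + d)))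
     + Qf S zs vs th j (t + sN S) (pred S (th j) z t u (sN S))"

definition lmpc_optimal :: "('n::finite, 'm::finite, 'd::finite, 'c::finite, 'p) lmpc_sys \<Rightarrow> (nat \<Rightarrow> nat \<Rightarrow> real^'n) \<Rightarrow> (nat \<Rightarrow> nat \<Rightarrow> real^'m) \<Rightarrow> (nat \<Rightarrow> 'p) \<Rightarrow> nat \<Rightarrow> nat \<Rightarrow> real^'n \<Rightarrow> (nat \<Rightarrow> real^'m) \<Rightarrow> bool" where
  "lmpc_optimal S zs vs th j t z u \<longleftrightarrow>
     lmpc_feasible S zs vs th j t z u
     \<and> (\<forall>u'. lmpc_feasible S zs vs th j t z u' \<longrightarrow> lmpc_cost S zs vs th j t z u \<le> lmpc_cost S zs vs th j t z u')"

definition Jcl :: "('n::finite, 'm::finite, 'd::finite, 'c::finite, 'p) lmpc_sys \<Rightarrow> (nat \<Rightarrow> nat \<Rightarrow> real^'n) \<Rightarrow> (nat \<Rightarrow> nat \<Rightarrow> real^'m) \<Rightarrow> nat \<Rightarrow> nat \<Rightarrow> real" where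
  "Jcl S zs vs j t = (\<Sum>k = t..sT S. sl S k (zs j k) (vs j k))"

end

theory Submission
  imports Defs
begin

text \<open>Two inequalities are chained. If a shifted stored trajectory passes through the closed-loop
  state z at time t, its inputs form a feasible plan of the LMPC problem at t (the shifted trajectory
  satisfies the tightened constraints and ends in the safe set), so the optimal cost at t is at most
  the shifted cost. Conversely the closed-loop cost from t is at most the optimal cost at t, by
  backward induction from T - N: at T - N the closed loop executes the last optimal plan, whose
  terminal cost-to-go is the last stage cost; for t < T - N the optimal plan at t, continued at its
  terminal state by the stored trajectory attaining the cost-to-go, is feasible at t + 1 and costs
  the optimal cost at t minus the first stage cost.\<close>

lemma shz_Suc:
  assumes "zi (Suc k) = dyn S thi k (zi k) (vi k)" and "t \<le> k"
  shows "shz S zi thi th t (Suc k) = dyn S th k (shz S zi thi th t k) (shv S vi thi th t k)"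
proof -
  have "Suc k - t = Suc (k - t)" and "t + (k - t) = k" using assms(2) by auto
  then show ?thesis
    using assms(1)
    by (simp add: shz_def shv_def dyn_def Phi_def matrix_vector_mult_add_rdistrib
        matrix_vector_right_distrib matrix_vector_mul_assoc matrix_vector_mult_diff_distrib algebra_simps)
qed

lemma pred_Suc_start:
  "pred S th z t u (Suc d) = pred S th (dyn S th t z (u t)) (Suc t) u d"
  by (induction d) simp_all

lemma pred_cong:
  assumes "\<And>k. t \<le> k \<Longrightarrow> k < t + d \<Longrightarrow> u k = u' k"
  shows "pred S th z t u d = pred S th z t u' d"
  using assms by (induction d) auto

lemma pred_eq_trajectory:
  assumes "\<And>k. t \<le> k \<Longrightarrow> k < t + n \<Longrightarrow> z (Suc k) = dyn S th k (z k) (u k)" and "d \<le> n"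
  shows "pred S th (z t) t u d = z (t + d)"
  using assms(2) by (induction d) (auto simp: assms(1))

lemma pred_shifted:
  assumes "\<And>k. k < sT S \<Longrightarrow> zi (Suc k) = dyn S thi k (zi k) (vi k)"
    and "t' \<le> t" and "t + d \<le> sT S"
  shows "pred S th (shz S zi thi th t' t) t (shv S vi thi th t') d = shz S zi thi th t' (t + d)"
  using assms by (intro pred_eq_trajectory[where n = d] shz_Suc) auto

lemma sum_lessThan_add_atLeastAtMost:
  fixes f :: "nat \<Rightarrow> 'a::comm_monoid_add"
  assumes "t + n \<le> Suc T"
  shows "(\<Sum>d<n. f (t + d)) + (\<Sum>k = t + n..T. f k) = (\<Sum>k = t..T. f k)"
  using assms
proof (induction n)
  case (Suc n)
  then have "(\<Sum>k = t + n..T. f k) = f (t + n) + (\<Sum>k = Suc (t + n)..T. f k)"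
    by (intro sum.atLeast_Suc_atMost) simp
  with Suc show ?case by (simp add: add.assoc)
qed simp

lemma Qf_le_Jsh:
  assumes "i < j" "t' \<le> k" "th j \<in> Wfeas S (zs i) (vs i) (th i) t'"
    and "shz S (zs i) (th i) (th j) t' k = z"
  shows "Qf S zs vs th j k z \<le> ereal (Jsh S zs vs th i j t' k)"
  unfolding Qf_def by (rule INF_lower2[of "(i, t')"]) (use assms in auto)

lemma Qf_attained:
  assumes "z \<in> SS S zs vs th j k"
  obtains i t' where "i < j" "t' \<le> k" "th j \<in> Wfeas S (zs i) (vs i) (th i) t'"
    "shz S (zs i) (th i) (th j) t' k = z" "Qf S zs vs th j k z = ereal (Jsh S zs vs th i j t' k)"
proof -
  define P where "P = {(i, t'). i < j \<and> t' \<le> k \<and> th j \<in> Wfeas S (zs i) (vs i) (th i) t'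
                        \<and> shz S (zs i) (th i) (th j) t' k = z}"
  define g where "g = (\<lambda>p. ereal (Jsh S zs vs th (fst p) j (snd p) k))"
  have "finite P" unfolding P_def
    by (rule finite_subset[of _ "{..<j} \<times> {..k}"]) auto
  moreover have "P \<noteq> {}" using assms unfolding SS_def P_def by auto
  ultimately have "Min (g ` P) \<in> g ` P" and "Qf S zs vs th j k z = Min (g ` P)"
    unfolding Qf_def P_def[symmetric] g_def[symmetric] by (auto intro: cInf_eq_Min)
  then obtain p where "p \<in> P" "Qf S zs vs th j k z = g p" by auto
  then show ?thesis using that unfolding P_def g_def by (cases p) auto
qed

lemma lmpc_feasible_shifted:
  assumes "\<And>k. k < sT S \<Longrightarrow> zs i (Suc k) = dyn S (th i) k (zs i k) (vs i k)"
    and "i < j" "t' \<le> t" "t + sN S \<le> sT S" "th j \<in> Wfeas S (zs i) (vs i) (th i) t'"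
  shows "lmpc_feasible S zs vs th j t (shz S (zs i) (th i) (th j) t' t) (shv S (vs i) (th i) (th j) t')"
proof -
  have pred: "pred S (th j) (shz S (zs i) (th i) (th j) t' t) t (shv S (vs i) (th i) (th j) t') d
      = shz S (zs i) (th i) (th j) t' (t + d)" if "d \<le> sN S" for d
    using assms that by (intro pred_shifted) auto
  show ?thesis
    unfolding lmpc_feasible_def SS_def using assms pred by (fastforce simp: Wfeas_def)
qed

lemma lmpc_optimal_cost_le_Jsh:
  assumes "\<And>k. k < sT S \<Longrightarrow> zs i (Suc k) = dyn S (th i) k (zs i k) (vs i k)"
    and "i < j" "t' \<le> t" "t + sN S \<le> sT S" "th j \<in> Wfeas S (zs i) (vs i) (th i) t'"
    and "lmpc_optimal S zs vs th j t (shz S (zs i) (th i) (th j) t' t) u"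
  shows "lmpc_cost S zs vs th j t (shz S (zs i) (th i) (th j) t' t) u \<le> ereal (Jsh S zs vs th i j t' t)"
proof -
  let ?z = "shz S (zs i) (th i) (th j) t'" and ?v = "shv S (vs i) (th i) (th j) t'"
  let ?g = "\<lambda>k. sl S k (?z k) (?v k)"
  have "lmpc_cost S zs vs th j t (?z t) u \<le> lmpc_cost S zs vs th j t (?z t) ?v"
    using assms lmpc_feasible_shifted unfolding lmpc_optimal_def by blast
  also have "\<dots> = ereal (\<Sum>d<sN S. ?g (t + d)) + Qf S zs vs th j (t + sN S) (?z (t + sN S))"
    using assms by (simp add: lmpc_cost_def pred_shifted)
  also have "\<dots> \<le> ereal (\<Sum>d<sN S. ?g (t + d)) + ereal (Jsh S zs vs th i j t' (t + sN S))"
    using assms by (intro add_left_mono Qf_le_Jsh) auto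
  also have "\<dots> = ereal (Jsh S zs vs th i j t' t)"
    using assms sum_lessThan_add_atLeastAtMost[of t "sN S" "sT S" ?g] by (simp add: Jsh_def)
  finally show ?thesis .
qed

definition append_plan :: "nat \<Rightarrow> (nat \<Rightarrow> 'a) \<Rightarrow> (nat \<Rightarrow> 'a) \<Rightarrow> nat \<Rightarrow> 'a" where
  "append_plan n u v k = (if k < n then u k else v k)"

lemma pred_append_plan:
  assumes "0 < n"
  shows pred_append_plan_Suc_start: "pred S th (dyn S th t z (u t)) (Suc t) (append_plan (t + n) u v) d
      = pred S th z t (append_plan (t + n) u v) (Suc d)"
    and pred_append_plan_before: "d \<le> n \<Longrightarrow> pred S th z t (append_plan (t + n) u v) d = pred S th z t u d"
proof -
  have "append_plan (t + n) u v t = u t"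
    using assms by (simp add: append_plan_def)
  then show "pred S th (dyn S th t z (u t)) (Suc t) (append_plan (t + n) u v) d
      = pred S th z t (append_plan (t + n) u v) (Suc d)"
    by (simp only: pred_Suc_start)
  show "d \<le> n \<Longrightarrow> pred S th z t (append_plan (t + n) u v) d = pred S th z t u d"
    by (intro pred_cong) (simp add: append_plan_def)
qed

lemma lmpc_feasible_append_plan:
  assumes "\<And>k. k < sT S \<Longrightarrow> zs i (Suc k) = dyn S (th i) k (zs i k) (vs i k)"
    and "0 < sN S" "t + sN S < sT S"
    and "i < j" "t0 \<le> t + sN S" "th j \<in> Wfeas S (zs i) (vs i) (th i) t0"
    and "lmpc_feasible S zs vs th j t z u"
    and p_end: "pred S (th j) z t u (sN S) = shz S (zs i) (th i) (th j) t0 (t + sN S)"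
  shows "lmpc_feasible S zs vs th j (Suc t) (dyn S (th j) t z (u t))
    (append_plan (t + sN S) u (shv S (vs i) (th i) (th j) t0))"
proof -
  let ?N = "sN S" and ?zi = "shz S (zs i) (th i) (th j) t0" and ?vi = "shv S (vs i) (th i) (th j) t0"
  let ?w = "append_plan (t + ?N) u ?vi"
  let ?q = "pred S (th j) z t ?w"
  have q_p: "?q d = pred S (th j) z t u d" if "d \<le> ?N" for d
    using that \<open>0 < ?N\<close> by (simp add: pred_append_plan_before)
  have cstr_q: "cstr S (t + d) (?q d) (?w (t + d))" if "d \<le> ?N" for d
  proof (cases "d < ?N")
    case True
    then show ?thesis
      using \<open>lmpc_feasible S zs vs th j t z u\<close> q_p[of d] by (simp add: lmpc_feasible_def append_plan_def)
  next
    case False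
    then show ?thesis
      using assms that q_p[of ?N] by (simp add: append_plan_def Wfeas_def)
  qed
  have "?q (Suc ?N) = ?zi (Suc (t + ?N))"
    using assms by (simp add: pred_append_plan_before append_plan_def shz_Suc)
  then show ?thesis
    unfolding lmpc_feasible_def SS_def pred_append_plan_Suc_start[OF \<open>0 < ?N\<close>]
  proof (intro conjI allI impI)
    show "cstr S (Suc t + d) (?q (Suc d)) (?w (Suc t + d))" if "d < ?N" for d
      using cstr_q[of "Suc d"] that by simp
  qed (use assms in force)
qed

lemma lmpc_optimal_cost_decrease:
  assumes history: "\<And>i k. i < j \<Longrightarrow> k < sT S \<Longrightarrow> zs i (Suc k) = dyn S (th i) k (zs i k) (vs i k)"
    and "0 < sN S" "t + sN S < sT S"
    and opt: "lmpc_optimal S zs vs th j t z u"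
    and opt': "lmpc_optimal S zs vs th j (Suc t) (dyn S (th j) t z (u t)) u'"
  shows "ereal (sl S t z (u t)) + lmpc_cost S zs vs th j (Suc t) (dyn S (th j) t z (u t)) u'
      \<le> lmpc_cost S zs vs th j t z u"
proof -
  let ?N = "sN S" and ?p = "pred S (th j) z t u"
  have feasible: "lmpc_feasible S zs vs th j t z u" and "?p ?N \<in> SS S zs vs th j (t + ?N)"
    using opt unfolding lmpc_optimal_def lmpc_feasible_def by auto
  then obtain i t0 where i: "i < j" "t0 \<le> t + ?N" "th j \<in> Wfeas S (zs i) (vs i) (th i) t0"
    and p_end: "shz S (zs i) (th i) (th j) t0 (t + ?N) = ?p ?N"
    and Q_end: "Qf S zs vs th j (t + ?N) (?p ?N) = ereal (Jsh S zs vs th i j t0 (t + ?N))"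
    using Qf_attained by metis
  let ?zi = "shz S (zs i) (th i) (th j) t0" and ?vi = "shv S (vs i) (th i) (th j) t0"
  let ?w = "append_plan (t + ?N) u ?vi" and ?z' = "dyn S (th j) t z (u t)"
  define q where "q = pred S (th j) z t ?w"
  define g where "g d = sl S (t + d) (q d) (?w (t + d))" for d
  have q_p: "d \<le> ?N \<Longrightarrow> q d = ?p d" and q_Suc: "pred S (th j) ?z' (Suc t) ?w d = q (Suc d)" for d
    using \<open>0 < ?N\<close> by (simp_all add: q_def pred_append_plan_before pred_append_plan_Suc_start)
  have q_end: "q (Suc ?N) = ?zi (Suc (t + ?N))"
    using i(2) \<open>0 < ?N\<close> \<open>t + ?N < sT S\<close> p_end history[OF i(1)]
    by (simp add: q_def pred_append_plan_before append_plan_def shz_Suc)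
  have "lmpc_feasible S zs vs th j (Suc t) ?z' ?w"
    using history i feasible p_end \<open>0 < ?N\<close> \<open>t + ?N < sT S\<close> by (intro lmpc_feasible_append_plan) auto
  then have "lmpc_cost S zs vs th j (Suc t) ?z' u' \<le> lmpc_cost S zs vs th j (Suc t) ?z' ?w"
    using opt' unfolding lmpc_optimal_def by blast
  also have "\<dots> = ereal (\<Sum>d<?N. g (Suc d)) + Qf S zs vs th j (Suc (t + ?N)) (?zi (Suc (t + ?N)))"
    by (simp add: lmpc_cost_def q_Suc q_end g_def)
  also have "\<dots> \<le> ereal (\<Sum>d<?N. g (Suc d)) + ereal (Jsh S zs vs th i j t0 (Suc (t + ?N)))"
    using i by (intro add_left_mono Qf_le_Jsh) auto
  finally have "ereal (g 0) + lmpc_cost S zs vs th j (Suc t) ?z' u'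
      \<le> ereal (g 0) + (ereal (\<Sum>d<?N. g (Suc d)) + ereal (Jsh S zs vs th i j t0 (Suc (t + ?N))))"
    by (rule add_left_mono)
  also have "\<dots> = ereal ((\<Sum>d<?N. g d) + (g ?N + Jsh S zs vs th i j t0 (Suc (t + ?N))))"
    using sum.lessThan_Suc_shift[of g ?N] by (simp add: add.assoc)
  also have "\<dots> = ereal (\<Sum>d<?N. g d) + ereal (Jsh S zs vs th i j t0 (t + ?N))"
    using \<open>t + ?N < sT S\<close> q_p[of ?N] p_end
    by (simp add: Jsh_def g_def append_plan_def sum.atLeast_Suc_atMost)
  also have "\<dots> = lmpc_cost S zs vs th j t z u"
    using q_p by (simp add: lmpc_cost_def Q_end g_def append_plan_def)
  finally show ?thesis
    using \<open>0 < ?N\<close> by (simp add: g_def q_def append_plan_def)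
qed

locale lmpc_closed_loop =
  fixes S :: "('n::finite, 'm::finite, 'd::finite, 'c::finite, 'p) lmpc_sys"
    and zs :: "nat \<Rightarrow> nat \<Rightarrow> real^'n"
    and vs :: "nat \<Rightarrow> nat \<Rightarrow> real^'m"
    and th :: "nat \<Rightarrow> 'p"
    and j :: nat
    and vopt :: "nat \<Rightarrow> nat \<Rightarrow> real^'m"
  assumes horizon: "0 < sN S" "sN S \<le> sT S"
    and trajectories: "\<And>i k. i \<le> j \<Longrightarrow> k < sT S \<Longrightarrow> zs i (Suc k) = dyn S (th i) k (zs i k) (vs i k)"
    and optimal: "\<And>t. t \<le> sT S - sN S \<Longrightarrow> lmpc_optimal S zs vs th j t (zs j t) (vopt t)"
    and input: "\<And>t. t < sT S \<Longrightarrow>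
      vs j t = (if t + sN S \<le> sT S then vopt t t else vopt (sT S - sN S) t)"
    and terminal_cost: "Qf S zs vs th j (sT S) (zs j (sT S)) = ereal (sl S (sT S) (zs j (sT S)) (vs j (sT S)))"
begin

abbreviation M :: nat where "M \<equiv> sT S - sN S"

lemma optimal_cost_last: "lmpc_cost S zs vs th j M (zs j M) (vopt M) = ereal (Jcl S zs vs j M)"
proof -
  let ?g = "\<lambda>k. sl S k (zs j k) (vs j k)"
  have input_last: "vs j k = vopt M k" if "M \<le> k" "k < sT S" for k
  proof -
    have "k + sN S \<le> sT S \<Longrightarrow> k = M" using that by linarith
    then show ?thesis using input[OF that(2)] by auto
  qed
  have pred_last: "pred S (th j) (zs j M) M (vopt M) d = zs j (M + d)" if "d \<le> sN S" for d
    using that horizon by (intro pred_eq_trajectory[where n = "sN S"]) (simp_all add: trajectories input_last)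
  have "lmpc_cost S zs vs th j M (zs j M) (vopt M) = ereal (\<Sum>d<sN S. ?g (M + d)) + ereal (?g (sT S))"
    using horizon pred_last by (simp add: lmpc_cost_def input_last terminal_cost)
  also have "\<dots> = ereal (Jcl S zs vs j M)"
    using horizon sum_lessThan_add_atLeastAtMost[of M "sN S" "sT S" ?g] by (simp add: Jcl_def)
  finally show ?thesis .
qed

lemma closed_loop_cost_le_optimal:
  assumes "t \<le> M"
  shows "ereal (Jcl S zs vs j t) \<le> lmpc_cost S zs vs th j t (zs j t) (vopt t)"
  using assms
proof (induction t rule: inc_induct)
  case base
  then show ?case by (simp add: optimal_cost_last)
next
  case (step t)
  then have "t + sN S < sT S" by linarith
  have next_state: "zs j (Suc t) = dyn S (th j) t (zs j t) (vopt t t)" and "vs j t = vopt t t"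
    using \<open>t + sN S < sT S\<close> by (simp_all add: trajectories input)
  have "ereal (Jcl S zs vs j t) = ereal (sl S t (zs j t) (vs j t)) + ereal (Jcl S zs vs j (Suc t))"
    using \<open>t + sN S < sT S\<close> by (simp add: Jcl_def sum.atLeast_Suc_atMost)
  also have "\<dots> \<le> ereal (sl S t (zs j t) (vs j t)) + lmpc_cost S zs vs th j (Suc t) (zs j (Suc t)) (vopt (Suc t))"
    using step.IH by (rule add_left_mono)
  also have "\<dots> \<le> lmpc_cost S zs vs th j t (zs j t) (vopt t)"
    using step.hyps horizon \<open>t + sN S < sT S\<close> optimal[of t] optimal[of "Suc t"]
    unfolding next_state \<open>vs j t = vopt t t\<close>
    by (intro lmpc_optimal_cost_decrease) (auto simp: trajectories)
  finally show ?case .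
qed

end

theorem theorem2:
  fixes S :: "('n::finite, 'm::finite, 'd::finite, 'c::finite, 'p) lmpc_sys"
    and W\<theta> :: "'p set"
    and zs :: "nat \<Rightarrow> nat \<Rightarrow> real^'n"
    and vs :: "nat \<Rightarrow> nat \<Rightarrow> real^'m"
    and th :: "nat \<Rightarrow> 'p"
    and vopt :: "nat \<Rightarrow> nat \<Rightarrow> nat \<Rightarrow> real^'m"
  assumes horizon: "1 \<le> sN S" "sN S \<le> sT S"
    and cost_cont: "\<And>k. k \<le> sT S \<Longrightarrow> continuous_on UNIV (\<lambda>p. sl S k (fst p) (snd p))"
    and cost_convex: "\<And>k. k \<le> sT S \<Longrightarrow> convex_on UNIV (\<lambda>p. sl S k (fst p) (snd p))"
    and cost_nonneg: "\<And>k z v. k \<le> sT S \<Longrightarrow> sl S k z v \<ge> 0"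
    and params: "\<And>j. th j \<in> W\<theta>"
    and it0_init: "zs 0 0 = sxs S"
    and it0_dyn: "\<And>k. k < sT S \<Longrightarrow> zs 0 (Suc k) = dyn S (th 0) k (zs 0 k) (vs 0 k)"
    and it0_cstr: "\<And>k. k \<le> sT S \<Longrightarrow> cstr S k (zs 0 k) (vs 0 k)"
    and it0_W: "\<And>t. t \<le> sT S \<Longrightarrow> W\<theta> \<subseteq> Wfeas S (zs 0) (vs 0) (th 0) t"
    and cl_init: "\<And>j. 1 \<le> j \<Longrightarrow> zs j 0 = sxs S"
    and cl_dyn: "\<And>j k. 1 \<le> j \<Longrightarrow> k < sT S \<Longrightarrow> zs j (Suc k) = dyn S (th j) k (zs j k) (vs j k)"
    and cl_opt: "\<And>j t. 1 \<le> j \<Longrightarrow> t \<le> sT S - sN S \<Longrightarrow> lmpc_optimal S zs vs th j t (zs j t) (vopt j t)"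
    and cl_input: "\<And>j t. 1 \<le> j \<Longrightarrow> t < sT S \<Longrightarrow>
        vs j t = (if t + sN S \<le> sT S then vopt j t t else vopt j (sT S - sN S) t)"
    and cl_terminal: "\<And>j. 1 \<le> j \<Longrightarrow> \<exists>i t'. i < j \<and> t' \<le> sT S
        \<and> th j \<in> Wfeas S (zs i) (vs i) (th i) t'
        \<and> shz S (zs i) (th i) (th j) t' (sT S) = zs j (sT S)
        \<and> vs j (sT S) = shv S (vs i) (th i) (th j) t' (sT S)
        \<and> ereal (Jsh S zs vs th i j t' (sT S)) = Qf S zs vs th j (sT S) (zs j (sT S))"
  shows "(\<forall>j t i t'. 1 \<le> j \<longrightarrow> t \<le> sT S - sN S \<longrightarrow> i < j \<longrightarrow> t' \<le> t
            \<longrightarrow> th j \<in> Wfeas S (zs i) (vs i) (th i) t'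
            \<longrightarrow> shz S (zs i) (th i) (th j) t' t = zs j t
            \<longrightarrow> Jcl S zs vs j t \<le> Jsh S zs vs th i j t' t)
       \<and> (\<forall>j i. 1 \<le> j \<longrightarrow> i < j \<longrightarrow> th j \<in> Wfeas S (zs i) (vs i) (th i) 0
            \<longrightarrow> Jcl S zs vs j 0 \<le> Jsh S zs vs th i j 0 0)"
proof -
  have trajectories: "\<And>i k. k < sT S \<Longrightarrow> zs i (Suc k) = dyn S (th i) k (zs i k) (vs i k)"
    using it0_dyn cl_dyn by (metis One_nat_def Suc_leI not_gr_zero)
  have closed_loop: "lmpc_closed_loop S zs vs th j (vopt j)" if j: "1 \<le> j" for j
  proof
    obtain i t' where "shz S (zs i) (th i) (th j) t' (sT S) = zs j (sT S)"
      "vs j (sT S) = shv S (vs i) (th i) (th j) t' (sT S)"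
      "ereal (Jsh S zs vs th i j t' (sT S)) = Qf S zs vs th j (sT S) (zs j (sT S))"
      using cl_terminal[OF j] by blast
    then show "Qf S zs vs th j (sT S) (zs j (sT S)) = ereal (sl S (sT S) (zs j (sT S)) (vs j (sT S)))"
      by (simp add: Jsh_def)
  qed (use horizon trajectories cl_opt cl_input j in auto)
  have main: "Jcl S zs vs j t \<le> Jsh S zs vs th i j t' t"
    if "1 \<le> j" "t \<le> sT S - sN S" "i < j" "t' \<le> t" "th j \<in> Wfeas S (zs i) (vs i) (th i) t'"
      and shifted_start: "shz S (zs i) (th i) (th j) t' t = zs j t" for j t i t'
  proof -
    interpret lmpc_closed_loop S zs vs th j "vopt j"
      using closed_loop \<open>1 \<le> j\<close> .
    have "ereal (Jcl S zs vs j t) \<le> lmpc_cost S zs vs th j t (zs j t) (vopt j t)"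
      using \<open>t \<le> sT S - sN S\<close> by (rule closed_loop_cost_le_optimal)
    also have "\<dots> \<le> ereal (Jsh S zs vs th i j t' t)"
      using that optimal[of t] horizon unfolding shifted_start[symmetric]
      by (intro lmpc_optimal_cost_le_Jsh trajectories) auto
    finally show ?thesis by simp
  qed
  show ?thesis
  proof (intro conjI allI impI)
    fix j i assume "1 \<le> j" "i < j" "th j \<in> Wfeas S (zs i) (vs i) (th i) 0"
    moreover have "shz S (zs i) (th i) (th j) 0 0 = zs j 0"
      using it0_init cl_init \<open>1 \<le> j\<close> by (cases i) (simp_all add: shz_def)
    ultimately show "Jcl S zs vs j 0 \<le> Jsh S zs vs th i j 0 0"
      using main[of j 0 i 0] by simp
  qed (use main in blast)
qed

end
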